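(* Let $M$ be a graded $R$-module, and give $qp.Spec_g(M)$ the quasi-Zariski topology. Then: (1) $qp.Spec_g(M)$ is a $T_1$-space if and only if it is a $T_0$-space and for every $Q\in qp.Spec_g(M)$, $Gr((Q:_RM))$ is a maximal element of $\{Gr((K:_RM))\mid K\in qp.Spec_g(M)\}$. (2) $qp.Spec_g(M)$ is a $T_1$-space if and only if it is a $T_0$-space and every graded quasi-primary submodule of $M$ satisfying the graded primeful property is a maximal element (with respect to inclusion) of $qp.Spec_g(M)$. (3) If $(0)\in qp.Spec_g(M)$, then $qp.Spec_g(M)$ is a $T_1$-space if and only if $(0)$ is the only graded quasi-primary submodule of $M$ satisfying the graded primeful property. (4) If $qp.Spec_g(M)$ is a $T_0$-space and $qp.Spec_g(M)=Max_g(M)$, then $qp.Spec_g(M)$ is a $T_1$-space.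
   Context: $R=\bigoplus_{g\in G}R_g$ is a graded commutative ring with identity graded by a group $G$, $h(R)=\bigcup_g R_g$; $M$ is a graded $R$-module, $h(M)$ its homogeneous elements. $Gr(I)$ is the graded radical of a graded ideal $I$. $(K:_RM)=\{r: rM\subseteq K\}$. Graded prime submodule: proper graded $P$ with $rm\in P$ ($r\in h(R), m\in h(M)$) implying $m\in P$ or $r\in(P:_RM)$. $Gr_M(K)$: intersection of graded prime submodules containing $K$ ($M$ if none). Graded primeful property of $K$: for each graded prime $p\supseteq(K:_RM)$ there is a graded prime submodule $P\supseteq K$ with $(P:_RM)=p$. Graded quasi-primary submodule: proper graded $Q$ with $rm\in Q$ ($r\in h(R),m\in h(M)$) implying $r\in Gr((Q:_RM))$ or $m\in Gr_M(Q)$. $qp.Spec_g(M)$: graded quasi-primary submodules with the graded primeful property. $qp\text{-}V_M^g(K)=\{Q\in qp.Spec_g(M): Gr((Q:_RM))\supseteq Gr((K:_RM))\}$; the quasi-Zariski topology has closed sets exactly these. $Max_g(M)$ is the set of graded maximal submodules of $M$, i.e. graded submodules $K\ne M$ with no graded submodule strictly between $K$ and $M$. *)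

theory Defs
  imports Main "HOL.Modules"
begin

text \<open>The ring is the whole type 'r (a commutative ring with 1), the module M is
the whole type 'm, with scalar multiplication scale, making it an R-module in the sense of
the locale module from HOL. The grading group G is the type 'g (a group, written additively,
not necessarily abelian). Rg g is the homogeneous component R_g, Mg g is M_g.\<close>

definition is_decomp :: "('g \<Rightarrow> 'a::ab_group_add set) \<Rightarrow> 'a \<Rightarrow> ('g \<Rightarrow> 'a) \<Rightarrow> bool" where
  "is_decomp A x c \<longleftrightarrow> finite {g. c g \<noteq> 0} \<and> (\<forall>g. c g \<in> A g) \<and> x = sum c {g. c g \<noteq> 0}"

definition direct_decomp :: "('g \<Rightarrow> 'a::ab_group_add set) \<Rightarrow> bool" where
  "direct_decomp A \<longleftrightarrow> (\<forall>x. \<exists>!c. is_decomp A x c)"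

definition add_subgroup :: "'a::ab_group_add set \<Rightarrow> bool" where
  "add_subgroup S \<longleftrightarrow> 0 \<in> S \<and> (\<forall>x\<in>S. \<forall>y\<in>S. x + y \<in> S \<and> - x \<in> S)"

definition hcomp :: "('g \<Rightarrow> 'a::ab_group_add set) \<Rightarrow> 'a \<Rightarrow> 'g \<Rightarrow> 'a" where
  "hcomp A x = (THE c. is_decomp A x c)"

definition homog :: "('g \<Rightarrow> 'a set) \<Rightarrow> 'a set" where
  "homog A = (\<Union>g. A g)"

definition graded_ring :: "('g::group_add \<Rightarrow> 'r::comm_ring_1 set) \<Rightarrow> bool" where
  "graded_ring Rg \<longleftrightarrow> (\<forall>g. add_subgroup (Rg g))
     \<and> (\<forall>g h. \<forall>a\<in>Rg g. \<forall>b\<in>Rg h. a * b \<in> Rg (g + h))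
     \<and> direct_decomp Rg"

definition graded_module ::
  "('r::comm_ring_1 \<Rightarrow> 'm::ab_group_add \<Rightarrow> 'm) \<Rightarrow> ('g::group_add \<Rightarrow> 'r set) \<Rightarrow> ('g \<Rightarrow> 'm set) \<Rightarrow> bool" where
  "graded_module scale Rg Mg \<longleftrightarrow> Modules.module scale \<and> graded_ring Rg
     \<and> (\<forall>g. add_subgroup (Mg g))
     \<and> (\<forall>g h. \<forall>a\<in>Rg g. \<forall>m\<in>Mg h. scale a m \<in> Mg (g + h))
     \<and> direct_decomp Mg"

definition is_ideal :: "'r::comm_ring_1 set \<Rightarrow> bool" where
  "is_ideal I \<longleftrightarrow> 0 \<in> I \<and> (\<forall>a\<in>I. \<forall>b\<in>I. a + b \<in> I) \<and> (\<forall>r. \<forall>a\<in>I. r * a \<in> I)"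

definition graded_ideal :: "('g \<Rightarrow> 'r::comm_ring_1 set) \<Rightarrow> 'r set \<Rightarrow> bool" where
  "graded_ideal Rg I \<longleftrightarrow> is_ideal I \<and> (\<forall>a\<in>I. \<forall>g. hcomp Rg a g \<in> I)"

definition graded_prime_ideal :: "('g \<Rightarrow> 'r::comm_ring_1 set) \<Rightarrow> 'r set \<Rightarrow> bool" where
  "graded_prime_ideal Rg p \<longleftrightarrow> graded_ideal Rg p \<and> p \<noteq> UNIV
     \<and> (\<forall>a\<in>homog Rg. \<forall>b\<in>homog Rg. a * b \<in> p \<longrightarrow> a \<in> p \<or> b \<in> p)"

definition Gr :: "('g \<Rightarrow> 'r::comm_ring_1 set) \<Rightarrow> 'r set \<Rightarrow> 'r set" where
  "Gr Rg I = {r. \<forall>g. \<exists>n::nat. n > 0 \<and> (hcomp Rg r g) ^ n \<in> I}"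

definition graded_submodule ::
  "('r::comm_ring_1 \<Rightarrow> 'm::ab_group_add \<Rightarrow> 'm) \<Rightarrow> ('g \<Rightarrow> 'm set) \<Rightarrow> 'm set \<Rightarrow> bool" where
  "graded_submodule scale Mg N \<longleftrightarrow> module.subspace scale N \<and> (\<forall>x\<in>N. \<forall>g. hcomp Mg x g \<in> N)"

definition colon :: "('r::comm_ring_1 \<Rightarrow> 'm \<Rightarrow> 'm) \<Rightarrow> 'm set \<Rightarrow> 'r set" where
  "colon scale K = {r. \<forall>m. scale r m \<in> K}"

definition graded_prime_submodule ::
  "('r::comm_ring_1 \<Rightarrow> 'm::ab_group_add \<Rightarrow> 'm) \<Rightarrow> ('g \<Rightarrow> 'r set) \<Rightarrow> ('g \<Rightarrow> 'm set) \<Rightarrow> 'm set \<Rightarrow> bool" where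
  "graded_prime_submodule scale Rg Mg P \<longleftrightarrow> graded_submodule scale Mg P \<and> P \<noteq> UNIV
     \<and> (\<forall>r\<in>homog Rg. \<forall>m\<in>homog Mg. scale r m \<in> P \<longrightarrow> m \<in> P \<or> r \<in> colon scale P)"

text \<open>Gr_M(K): intersection of graded prime submodules containing K (= M if there is none).\<close>
definition GrM :: "('r::comm_ring_1 \<Rightarrow> 'm::ab_group_add \<Rightarrow> 'm) \<Rightarrow> ('g \<Rightarrow> 'r set) \<Rightarrow> ('g \<Rightarrow> 'm set) \<Rightarrow> 'm set \<Rightarrow> 'm set" where
  "GrM scale Rg Mg K = \<Inter>{P. graded_prime_submodule scale Rg Mg P \<and> K \<subseteq> P}"

definition graded_primeful ::
  "('r::comm_ring_1 \<Rightarrow> 'm::ab_group_add \<Rightarrow> 'm) \<Rightarrow> ('g \<Rightarrow> 'r set) \<Rightarrow> ('g \<Rightarrow> 'm set) \<Rightarrow> 'm set \<Rightarrow> bool" where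
  "graded_primeful scale Rg Mg K \<longleftrightarrow>
     (\<forall>p. graded_prime_ideal Rg p \<and> colon scale K \<subseteq> p \<longrightarrow>
        (\<exists>P. graded_prime_submodule scale Rg Mg P \<and> K \<subseteq> P \<and> colon scale P = p))"

definition graded_quasi_primary ::
  "('r::comm_ring_1 \<Rightarrow> 'm::ab_group_add \<Rightarrow> 'm) \<Rightarrow> ('g \<Rightarrow> 'r set) \<Rightarrow> ('g \<Rightarrow> 'm set) \<Rightarrow> 'm set \<Rightarrow> bool" where
  "graded_quasi_primary scale Rg Mg Q \<longleftrightarrow> graded_submodule scale Mg Q \<and> Q \<noteq> UNIV
     \<and> (\<forall>r\<in>homog Rg. \<forall>m\<in>homog Mg. scale r m \<in> Q \<longrightarrow>
          r \<in> Gr Rg (colon scale Q) \<or> m \<in> GrM scale Rg Mg Q)"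

definition qpSpec ::
  "('r::comm_ring_1 \<Rightarrow> 'm::ab_group_add \<Rightarrow> 'm) \<Rightarrow> ('g \<Rightarrow> 'r set) \<Rightarrow> ('g \<Rightarrow> 'm set) \<Rightarrow> 'm set set" where
  "qpSpec scale Rg Mg = {Q. graded_quasi_primary scale Rg Mg Q \<and> graded_primeful scale Rg Mg Q}"

definition qpV ::
  "('r::comm_ring_1 \<Rightarrow> 'm::ab_group_add \<Rightarrow> 'm) \<Rightarrow> ('g \<Rightarrow> 'r set) \<Rightarrow> ('g \<Rightarrow> 'm set) \<Rightarrow> 'm set \<Rightarrow> 'm set set" where
  "qpV scale Rg Mg K = {Q \<in> qpSpec scale Rg Mg. Gr Rg (colon scale K) \<subseteq> Gr Rg (colon scale Q)}"

definition qp_closed ::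
  "('r::comm_ring_1 \<Rightarrow> 'm::ab_group_add \<Rightarrow> 'm) \<Rightarrow> ('g \<Rightarrow> 'r set) \<Rightarrow> ('g \<Rightarrow> 'm set) \<Rightarrow> 'm set set \<Rightarrow> bool" where
  "qp_closed scale Rg Mg F \<longleftrightarrow> (\<exists>K. graded_submodule scale Mg K \<and> F = qpV scale Rg Mg K)"

definition qp_open ::
  "('r::comm_ring_1 \<Rightarrow> 'm::ab_group_add \<Rightarrow> 'm) \<Rightarrow> ('g \<Rightarrow> 'r set) \<Rightarrow> ('g \<Rightarrow> 'm set) \<Rightarrow> 'm set set \<Rightarrow> bool" where
  "qp_open scale Rg Mg U \<longleftrightarrow> U \<subseteq> qpSpec scale Rg Mg \<and> qp_closed scale Rg Mg (qpSpec scale Rg Mg - U)"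

definition qp_T0 ::
  "('r::comm_ring_1 \<Rightarrow> 'm::ab_group_add \<Rightarrow> 'm) \<Rightarrow> ('g \<Rightarrow> 'r set) \<Rightarrow> ('g \<Rightarrow> 'm set) \<Rightarrow> bool" where
  "qp_T0 scale Rg Mg \<longleftrightarrow> (\<forall>x\<in>qpSpec scale Rg Mg. \<forall>y\<in>qpSpec scale Rg Mg. x \<noteq> y \<longrightarrow>
     (\<exists>U. qp_open scale Rg Mg U \<and> (x \<in> U \<longleftrightarrow> y \<notin> U)))"

definition qp_T1 ::
  "('r::comm_ring_1 \<Rightarrow> 'm::ab_group_add \<Rightarrow> 'm) \<Rightarrow> ('g \<Rightarrow> 'r set) \<Rightarrow> ('g \<Rightarrow> 'm set) \<Rightarrow> bool" where
  "qp_T1 scale Rg Mg \<longleftrightarrow> (\<forall>x\<in>qpSpec scale Rg Mg. \<forall>y\<in>qpSpec scale Rg Mg. x \<noteq> y \<longrightarrow>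
     (\<exists>U. qp_open scale Rg Mg U \<and> x \<in> U \<and> y \<notin> U))"

definition Max_g ::
  "('r::comm_ring_1 \<Rightarrow> 'm::ab_group_add \<Rightarrow> 'm) \<Rightarrow> ('g \<Rightarrow> 'm set) \<Rightarrow> 'm set set" where
  "Max_g scale Mg = {K. graded_submodule scale Mg K \<and> K \<noteq> UNIV \<and>
     (\<forall>L. graded_submodule scale Mg L \<and> K \<subseteq> L \<longrightarrow> L = K \<or> L = UNIV)}"

end

theory Submission
  imports Defs
begin

text \<open>The closed sets qp-V(K) are upward closed for the preorder
Gr((Q:M)) \<subseteq> Gr((K:M)) on qp.Spec_g(M), and qp-V(Q) is the closure of Q. Hence T1 means
that this preorder is discrete and T0 that it is antisymmetric, which gives (1), (3), (4) and
one half of (2). For the other half, let Q be maximal in qp.Spec_g(M). Extend (Q:M) to a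
graded maximal ideal m (Zorn); m is graded prime, so the primeful property yields a graded
prime submodule P \<supseteq> Q with (P:M) = m. A graded prime submodule is graded quasi-primary,
and P is primeful because m is the only graded prime ideal containing m; thus P = Q by
maximality, i.e. (Q:M) is a graded maximal ideal and equals its graded radical. The preorder
then becomes inclusion between graded maximal ideals, which is discrete once it is
antisymmetric.\<close>

section \<open>Homogeneous components\<close>

lemma hcomp_is_decomp: "direct_decomp A \<Longrightarrow> is_decomp A x (hcomp A x)"
  unfolding hcomp_def direct_decomp_def by (metis theI')

lemma hcomp_eqI: "direct_decomp A \<Longrightarrow> is_decomp A x c \<Longrightarrow> hcomp A x = c"
  unfolding hcomp_def direct_decomp_def by (metis the1_equality)

lemma hcomp_in: "direct_decomp A \<Longrightarrow> hcomp A x g \<in> A g"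
  using hcomp_is_decomp unfolding is_decomp_def by blast

lemma finite_hcomp_support: "direct_decomp A \<Longrightarrow> finite {g. hcomp A x g \<noteq> 0}"
  using hcomp_is_decomp unfolding is_decomp_def by blast

lemma sum_hcomp: "direct_decomp A \<Longrightarrow> sum (hcomp A x) {g. hcomp A x g \<noteq> 0} = x"
  using hcomp_is_decomp unfolding is_decomp_def by metis

lemma sum_support_shift:
  fixes c :: "'g::group_add \<Rightarrow> 'a::comm_monoid_add"
  assumes S: "finite S" and supp: "\<And>g. c (g + h) \<noteq> 0 \<Longrightarrow> g \<in> S"
  shows "finite {g. c g \<noteq> 0}" and "sum c {g. c g \<noteq> 0} = (\<Sum>g\<in>S. c (g + h))"
proof -
  have sub: "{g. c g \<noteq> 0} \<subseteq> (\<lambda>g. g + h) ` S"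
  proof
    fix g assume "g \<in> {g. c g \<noteq> 0}"
    then have "g - h \<in> S" using supp[of "g - h"] by simp
    then show "g \<in> (\<lambda>g. g + h) ` S" by (rule rev_image_eqI) simp
  qed
  show "finite {g. c g \<noteq> 0}" using finite_subset[OF sub] S by blast
  have "sum c {g. c g \<noteq> 0} = sum c ((\<lambda>g. g + h) ` S)"
    using S sub by (intro sum.mono_neutral_left) auto
  also have "\<dots> = (\<Sum>g\<in>S. c (g + h))"
    by (rule sum.reindex_cong[where l = "\<lambda>g. g + h"]) (auto intro: inj_onI)
  finally show "sum c {g. c g \<noteq> 0} = (\<Sum>g\<in>S. c (g + h))" .
qed

lemma module_mult: "module ((*) :: 'a::comm_ring_1 \<Rightarrow> 'a \<Rightarrow> 'a)"
  by unfold_locales (simp_all add: algebra_simps)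

lemma graded_module_mult: "graded_ring Rg \<Longrightarrow> graded_module (*) Rg Rg"
  unfolding graded_module_def graded_ring_def using module_mult by blast

lemma hcomp_scale_homog:
  assumes gm: "graded_module scale Rg Mg" and m: "m \<in> Mg h"
  shows "hcomp Mg (scale r m) (g + h) = scale (hcomp Rg r g) m"
proof -
  have md: "module scale" and dR: "direct_decomp Rg" and dM: "direct_decomp Mg"
    and scale_homog: "\<And>g a. a \<in> Rg g \<Longrightarrow> scale a m \<in> Mg (g + h)"
    using gm m unfolding graded_module_def graded_ring_def by blast+
  define c where "c g' = scale (hcomp Rg r (g' - h)) m" for g'
  define S where "S = {g. hcomp Rg r g \<noteq> 0}"
  have S: "finite S" unfolding S_def using finite_hcomp_support[OF dR] .
  have supp: "g \<in> S" if "c (g + h) \<noteq> 0" for g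
    using that module.scale_zero_left[OF md] unfolding c_def S_def by auto
  note shift = sum_support_shift[of S c h, OF S supp]
  have "is_decomp Mg (scale r m) c"
    unfolding is_decomp_def
  proof (intro conjI allI)
    show "finite {g. c g \<noteq> 0}" using shift(1) by blast
    show "c g' \<in> Mg g'" for g'
      using scale_homog[OF hcomp_in[OF dR, of r "g' - h"]] unfolding c_def by simp
    have "scale r m = scale (sum (hcomp Rg r) S) m"
      unfolding S_def sum_hcomp[OF dR] ..
    also have "\<dots> = (\<Sum>g\<in>S. c (g + h))"
      unfolding module.scale_sum_left[OF md] c_def by simp
    finally show "scale r m = sum c {g. c g \<noteq> 0}" using shift(2) by simp
  qed
  then show ?thesis using hcomp_eqI[OF dM] unfolding c_def by fastforce
qed

corollary hcomp_mult_homog: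
  "graded_ring Rg \<Longrightarrow> b \<in> Rg h \<Longrightarrow> hcomp Rg (r * b) (g + h) = hcomp Rg r g * b"
  by (rule hcomp_scale_homog[OF graded_module_mult])

section \<open>Colon ideals and graded radicals\<close>

lemma is_ideal_iff_subspace: "is_ideal I \<longleftrightarrow> module.subspace (*) I"
  unfolding is_ideal_def module.subspace_def[OF module_mult] by blast

lemma ideal_eq_UNIV_iff:
  assumes "is_ideal I"
  shows "I = UNIV \<longleftrightarrow> 1 \<in> I"
proof
  assume "1 \<in> I"
  then have "x * 1 \<in> I" for x using assms unfolding is_ideal_def by blast
  then show "I = UNIV" by auto
qed auto

lemma colon_mono: "K \<subseteq> L \<Longrightarrow> colon scale K \<subseteq> colon scale L"
  unfolding colon_def by auto

lemma colon_ne_UNIV: "module scale \<Longrightarrow> K \<noteq> UNIV \<Longrightarrow> colon scale K \<noteq> UNIV"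
  unfolding colon_def by (metis (mono_tags) UNIV_I UNIV_eq_I mem_Collect_eq module.scale_one)

lemma is_ideal_colon:
  assumes md: "module scale" and K: "module.subspace scale K"
  shows "is_ideal (colon scale K)"
proof -
  have "scale 0 m \<in> K" for m
    using module.subspace_0[OF md K] by (simp add: module.scale_zero_left[OF md])
  moreover have "scale (a + b) m \<in> K" if "\<forall>m. scale a m \<in> K" "\<forall>m. scale b m \<in> K" for a b m
    using that module.subspace_add[OF md K] by (simp add: module.scale_left_distrib[OF md])
  moreover have "scale (r * a) m \<in> K" if "\<forall>m. scale a m \<in> K" for r a m
    using that module.subspace_scale[OF md K] by (metis module.scale_scale[OF md])
  ultimately show ?thesis unfolding is_ideal_def colon_def by blast
qed

lemma colon_homogI:
  assumes md: "module scale" and dM: "direct_decomp Mg" and K: "module.subspace scale K"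
    and homog: "\<And>h n. n \<in> Mg h \<Longrightarrow> scale r n \<in> K"
  shows "r \<in> colon scale K"
proof -
  have "scale r n \<in> K" for n
  proof -
    have "scale r n = scale r (sum (hcomp Mg n) {h. hcomp Mg n h \<noteq> 0})"
      unfolding sum_hcomp[OF dM] ..
    also have "\<dots> = (\<Sum>h\<in>{h. hcomp Mg n h \<noteq> 0}. scale r (hcomp Mg n h))"
      by (rule module.scale_sum_right[OF md])
    also have "\<dots> \<in> K"
      by (rule module.subspace_sum[OF md K]) (rule homog[OF hcomp_in[OF dM]])
    finally show ?thesis .
  qed
  then show ?thesis unfolding colon_def by blast
qed

lemma graded_ideal_colon:
  assumes gm: "graded_module scale Rg Mg" and K: "graded_submodule scale Mg K"
  shows "graded_ideal Rg (colon scale K)"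
proof -
  have md: "module scale" and dM: "direct_decomp Mg"
    using gm unfolding graded_module_def by blast+
  have sK: "module.subspace scale K" and hK: "\<And>x g. x \<in> K \<Longrightarrow> hcomp Mg x g \<in> K"
    using K unfolding graded_submodule_def by blast+
  have "hcomp Rg a g \<in> colon scale K" if a: "a \<in> colon scale K" for a g
  proof (rule colon_homogI[OF md dM sK])
    fix h n assume n: "n \<in> Mg h"
    have "scale a n \<in> K" using a unfolding colon_def by blast
    then have "hcomp Mg (scale a n) (g + h) \<in> K" by (rule hK)
    then show "scale (hcomp Rg a g) n \<in> K"
      unfolding hcomp_scale_homog[OF gm n] .
  qed
  then show ?thesis
    unfolding graded_ideal_def using is_ideal_colon[OF md sK] by blast
qed

lemma Gr_mono: "I \<subseteq> J \<Longrightarrow> Gr Rg I \<subseteq> Gr Rg J"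
  unfolding Gr_def by blast

lemma Gr_colon_mono: "Q \<subseteq> K \<Longrightarrow> Gr Rg (colon scale Q) \<subseteq> Gr Rg (colon scale K)"
  by (intro Gr_mono colon_mono)

lemma graded_ideal_subset_Gr: "graded_ideal Rg I \<Longrightarrow> I \<subseteq> Gr Rg I"
  unfolding Gr_def graded_ideal_def by (auto intro!: exI[of _ 1])

lemma homog_power:
  assumes gr: "graded_ring Rg" and a: "a \<in> homog Rg"
  shows "a ^ Suc n \<in> homog Rg"
proof (induction n)
  case 0
  show ?case using a by simp
next
  case (Suc n)
  obtain g h where "a \<in> Rg g" "a ^ Suc n \<in> Rg h"
    using Suc a unfolding homog_def by blast
  then have "a * a ^ Suc n \<in> Rg (g + h)"
    using gr unfolding graded_ring_def by blast
  then show ?case unfolding homog_def by (simp only: power_Suc[of a "Suc n"]) blast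
qed

lemma graded_prime_ideal_power_homog:
  assumes p: "graded_prime_ideal Rg p" and gr: "graded_ring Rg" and a: "a \<in> homog Rg"
  shows "a ^ Suc n \<in> p \<Longrightarrow> a \<in> p"
proof (induction n)
  case (Suc n)
  have prime: "\<And>b c. b \<in> homog Rg \<Longrightarrow> c \<in> homog Rg \<Longrightarrow> b * c \<in> p \<Longrightarrow> b \<in> p \<or> c \<in> p"
    using p unfolding graded_prime_ideal_def by blast
  have "a * a ^ Suc n \<in> p" using Suc.prems by (simp only: power_Suc[of a "Suc n"])
  then show ?case using prime[OF a homog_power[OF gr a]] Suc.IH by blast
qed simp

lemma Gr_graded_prime_ideal:
  assumes gr: "graded_ring Rg" and p: "graded_prime_ideal Rg p"
  shows "Gr Rg p = p"
proof
  have dR: "direct_decomp Rg" using gr unfolding graded_ring_def by blast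
  have gp: "graded_ideal Rg p" using p unfolding graded_prime_ideal_def by blast
  show "Gr Rg p \<subseteq> p"
  proof
    fix r assume r: "r \<in> Gr Rg p"
    have comp: "hcomp Rg r g \<in> p" for g
    proof -
      obtain n where "n > 0" "hcomp Rg r g ^ n \<in> p"
        using r unfolding Gr_def by blast
      then obtain k where "hcomp Rg r g ^ Suc k \<in> p"
        using gr0_implies_Suc by blast
      moreover have "hcomp Rg r g \<in> homog Rg"
        using hcomp_in[OF dR] unfolding homog_def by blast
      ultimately show ?thesis using graded_prime_ideal_power_homog[OF p gr] by blast
    qed
    have "is_ideal p" using gp unfolding graded_ideal_def by blast
    then have "module.subspace (*) p" unfolding is_ideal_iff_subspace .
    then have "sum (hcomp Rg r) {g. hcomp Rg r g \<noteq> 0} \<in> p"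
      using comp by (rule module.subspace_sum[OF module_mult])
    then show "r \<in> p" unfolding sum_hcomp[OF dR] .
  qed
  show "p \<subseteq> Gr Rg p" using graded_ideal_subset_Gr[OF gp] .
qed

section \<open>Graded maximal ideals\<close>

definition graded_maximal_ideal :: "('g \<Rightarrow> 'r::comm_ring_1 set) \<Rightarrow> 'r set \<Rightarrow> bool" where
  "graded_maximal_ideal Rg m \<longleftrightarrow> graded_ideal Rg m \<and> m \<noteq> UNIV
     \<and> (\<forall>I. graded_ideal Rg I \<and> I \<noteq> UNIV \<and> m \<subseteq> I \<longrightarrow> I = m)"

lemma graded_ideal_Union_chain:
  assumes "C \<noteq> {}" and ideals: "\<And>I. I \<in> C \<Longrightarrow> graded_ideal Rg I"
    and chain: "\<And>I J. I \<in> C \<Longrightarrow> J \<in> C \<Longrightarrow> I \<subseteq> J \<or> J \<subseteq> I"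
  shows "graded_ideal Rg (\<Union>C)"
  unfolding graded_ideal_def is_ideal_def
proof (intro conjI ballI allI)
  show "0 \<in> \<Union>C" using assms(1) ideals unfolding graded_ideal_def is_ideal_def by blast
next
  fix a b assume "a \<in> \<Union>C" "b \<in> \<Union>C"
  then obtain I J where IJ: "I \<in> C" "J \<in> C" and "a \<in> I" "b \<in> J" by blast
  then have "a \<in> I \<union> J" "b \<in> I \<union> J" by blast+
  moreover have "I \<union> J \<in> C" using chain[OF IJ] IJ by (metis sup.absorb1 sup.absorb2)
  ultimately show "a + b \<in> \<Union>C"
    using ideals[of "I \<union> J"] unfolding graded_ideal_def is_ideal_def by blast
next
  fix r a assume "a \<in> \<Union>C"
  then obtain I where "I \<in> C" "a \<in> I" by blast
  then show "r * a \<in> \<Union>C"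
    using ideals[of I] unfolding graded_ideal_def is_ideal_def by blast
next
  fix a g assume "a \<in> \<Union>C"
  then obtain I where "I \<in> C" "a \<in> I" by blast
  then show "hcomp Rg a g \<in> \<Union>C"
    using ideals[of I] unfolding graded_ideal_def by blast
qed

lemma graded_maximal_ideal_exists:
  assumes J: "graded_ideal Rg J" "J \<noteq> UNIV"
  shows "\<exists>m. graded_maximal_ideal Rg m \<and> J \<subseteq> m"
proof -
  have proper_iff: "I \<noteq> UNIV \<longleftrightarrow> 1 \<notin> I" if "graded_ideal Rg I" for I
    using ideal_eq_UNIV_iff that unfolding graded_ideal_def by blast
  define A where "A = {I. graded_ideal Rg I \<and> 1 \<notin> I \<and> J \<subseteq> I}"
  have "\<exists>m\<in>A. \<forall>I\<in>A. m \<subseteq> I \<longrightarrow> I = m"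
  proof (rule subset_Zorn_nonempty)
    have "J \<in> A" using J proper_iff[OF J(1)] unfolding A_def by blast
    then show "A \<noteq> {}" by blast
  next
    fix C assume "C \<noteq> {}" and chain: "subset.chain A C"
    then have "C \<subseteq> A" unfolding subset_chain_def by blast
    have "graded_ideal Rg (\<Union>C)"
    proof (rule graded_ideal_Union_chain[OF \<open>C \<noteq> {}\<close>])
      show "graded_ideal Rg I" if "I \<in> C" for I
        using that \<open>C \<subseteq> A\<close> unfolding A_def by blast
      show "I \<subseteq> I' \<or> I' \<subseteq> I" if "I \<in> C" "I' \<in> C" for I I'
        using that chain unfolding subset_chain_def by blast
    qed
    moreover have "1 \<notin> \<Union>C" using \<open>C \<subseteq> A\<close> unfolding A_def by blast
    moreover have "J \<subseteq> \<Union>C" using \<open>C \<subseteq> A\<close> \<open>C \<noteq> {}\<close> unfolding A_def by blast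
    ultimately show "\<Union>C \<in> A" unfolding A_def by blast
  qed
  then obtain m where "m \<in> A" and maximal: "\<And>I. I \<in> A \<Longrightarrow> m \<subseteq> I \<Longrightarrow> I = m"
    by blast
  have "graded_maximal_ideal Rg m"
    unfolding graded_maximal_ideal_def
  proof (intro conjI allI impI)
    show "graded_ideal Rg m" "m \<noteq> UNIV"
      using \<open>m \<in> A\<close> proper_iff unfolding A_def by blast+
    show "I = m" if "graded_ideal Rg I \<and> I \<noteq> UNIV \<and> m \<subseteq> I" for I
      using that maximal[of I] \<open>m \<in> A\<close> proper_iff[of I] unfolding A_def by blast
  qed
  then show ?thesis using \<open>m \<in> A\<close> unfolding A_def by blast
qed

lemma graded_maximal_ideal_imp_prime:
  assumes gr: "graded_ring Rg" and m: "graded_maximal_ideal Rg m"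
  shows "graded_prime_ideal Rg m"
proof -
  have gm: "graded_ideal Rg m" and proper: "m \<noteq> UNIV"
    and maximal: "\<And>I. graded_ideal Rg I \<Longrightarrow> I \<noteq> UNIV \<Longrightarrow> m \<subseteq> I \<Longrightarrow> I = m"
    using m unfolding graded_maximal_ideal_def by blast+
  have idm: "is_ideal m" and hm: "\<And>y g. y \<in> m \<Longrightarrow> hcomp Rg y g \<in> m"
    using gm unfolding graded_ideal_def by blast+
  have "a \<in> m \<or> b \<in> m" if "b \<in> homog Rg" and ab: "a * b \<in> m" for a b
  proof (rule disjCI)
    assume "b \<notin> m"
    obtain h where b: "b \<in> Rg h" using \<open>b \<in> homog Rg\<close> unfolding homog_def by blast
    define I where "I = {r. r * b \<in> m}"
    have "is_ideal I" using idm unfolding I_def is_ideal_def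
      by (simp add: distrib_right mult.assoc)
    moreover have "hcomp Rg r g \<in> I" if "r \<in> I" for r g
      using hm[of "r * b" "g + h"] that unfolding I_def hcomp_mult_homog[OF gr b] by blast
    ultimately have "graded_ideal Rg I" unfolding graded_ideal_def by blast
    moreover have "m \<subseteq> I"
    proof
      fix r assume "r \<in> m"
      then have "b * r \<in> m" using idm unfolding is_ideal_def by blast
      then show "r \<in> I" unfolding I_def by (simp add: mult.commute)
    qed
    moreover have "1 \<notin> I" using \<open>b \<notin> m\<close> unfolding I_def by simp
    ultimately have "I = m" using maximal by blast
    then show "a \<in> m" using ab unfolding I_def by blast
  qed
  then show ?thesis unfolding graded_prime_ideal_def using gm proper by blast
qed

section \<open>The quasi-Zariski topology on qp.Spec_g(M)\<close>

lemma qpSpecD: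
  "Q \<in> qpSpec scale Rg Mg \<Longrightarrow> graded_submodule scale Mg Q \<and> Q \<noteq> UNIV"
  unfolding qpSpec_def graded_quasi_primary_def by blast

lemma graded_prime_submodule_quasi_primary:
  assumes gm: "graded_module scale Rg Mg" and P: "graded_prime_submodule scale Rg Mg P"
  shows "graded_quasi_primary scale Rg Mg P"
proof -
  have gP: "graded_submodule scale Mg P" using P unfolding graded_prime_submodule_def by blast
  have "P \<subseteq> GrM scale Rg Mg P" unfolding GrM_def by blast
  moreover have "colon scale P \<subseteq> Gr Rg (colon scale P)"
    using graded_ideal_subset_Gr[OF graded_ideal_colon[OF gm gP]] .
  ultimately show ?thesis
    using P unfolding graded_quasi_primary_def graded_prime_submodule_def by blast
qed

lemma graded_primeful_if_colon_maximal:
  assumes P: "graded_prime_submodule scale Rg Mg P"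
    and m: "graded_maximal_ideal Rg (colon scale P)"
  shows "graded_primeful scale Rg Mg P"
  unfolding graded_primeful_def
proof (intro allI impI)
  fix p assume p: "graded_prime_ideal Rg p \<and> colon scale P \<subseteq> p"
  then have "graded_ideal Rg p" "p \<noteq> UNIV" "colon scale P \<subseteq> p"
    unfolding graded_prime_ideal_def by blast+
  then have "p = colon scale P"
    using m unfolding graded_maximal_ideal_def by blast
  then show "\<exists>P'. graded_prime_submodule scale Rg Mg P' \<and> P \<subseteq> P' \<and> colon scale P' = p"
    using P by blast
qed

lemma colon_graded_maximal_if_maximal_in_qpSpec:
  assumes gm: "graded_module scale Rg Mg" and Q: "Q \<in> qpSpec scale Rg Mg"
    and maximal: "\<And>K. K \<in> qpSpec scale Rg Mg \<Longrightarrow> Q \<subseteq> K \<Longrightarrow> K = Q"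
  shows "graded_maximal_ideal Rg (colon scale Q)"
proof -
  have md: "module scale" and gr: "graded_ring Rg"
    using gm unfolding graded_module_def by blast+
  have gQ: "graded_submodule scale Mg Q" and "Q \<noteq> UNIV" using qpSpecD[OF Q] by blast+
  then obtain m where m: "graded_maximal_ideal Rg m" and "colon scale Q \<subseteq> m"
    using graded_maximal_ideal_exists[OF graded_ideal_colon[OF gm gQ] colon_ne_UNIV[OF md]]
    by blast
  moreover have "graded_primeful scale Rg Mg Q" using Q unfolding qpSpec_def by blast
  ultimately obtain P where P: "graded_prime_submodule scale Rg Mg P" and "Q \<subseteq> P"
    and colon_P: "colon scale P = m"
    using graded_maximal_ideal_imp_prime[OF gr m] unfolding graded_primeful_def by blast
  have "graded_quasi_primary scale Rg Mg P"
    using graded_prime_submodule_quasi_primary[OF gm P] .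
  moreover have "graded_primeful scale Rg Mg P"
    using graded_primeful_if_colon_maximal[OF P] m colon_P by simp
  ultimately have "P \<in> qpSpec scale Rg Mg" unfolding qpSpec_def by blast
  then have "P = Q" using maximal \<open>Q \<subseteq> P\<close> by blast
  then show ?thesis using m colon_P by simp
qed

lemma qp_open_compl_qpV:
  assumes "Q \<in> qpSpec scale Rg Mg"
  shows "qp_open scale Rg Mg (qpSpec scale Rg Mg - qpV scale Rg Mg Q)"
proof -
  have "qpSpec scale Rg Mg - (qpSpec scale Rg Mg - qpV scale Rg Mg Q) = qpV scale Rg Mg Q"
    unfolding qpV_def by blast
  then show ?thesis
    using qpSpecD[OF assms] unfolding qp_open_def qp_closed_def by auto
qed

lemma qp_open_specialization_closed:
  assumes "qp_open scale Rg Mg U" and "Q \<in> U" and "K \<in> qpSpec scale Rg Mg"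
    and "Gr Rg (colon scale K) \<subseteq> Gr Rg (colon scale Q)"
  shows "K \<in> U"
proof -
  obtain L where L: "qpSpec scale Rg Mg - U = qpV scale Rg Mg L"
    using assms(1) unfolding qp_open_def qp_closed_def by blast
  show ?thesis
  proof (rule ccontr)
    assume "K \<notin> U"
    then have "Gr Rg (colon scale L) \<subseteq> Gr Rg (colon scale K)"
      using L assms(3) unfolding qpV_def by blast
    then have "Q \<in> qpV scale Rg Mg L"
      using assms(1,2,4) unfolding qp_open_def qpV_def by blast
    then show False using L \<open>Q \<in> U\<close> by blast
  qed
qed

lemma qp_T1_iff:
  "qp_T1 scale Rg Mg \<longleftrightarrow> (\<forall>Q\<in>qpSpec scale Rg Mg. \<forall>K\<in>qpSpec scale Rg Mg.
     Gr Rg (colon scale K) \<subseteq> Gr Rg (colon scale Q) \<longrightarrow> K = Q)"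
proof
  assume T1: "qp_T1 scale Rg Mg"
  show "\<forall>Q\<in>qpSpec scale Rg Mg. \<forall>K\<in>qpSpec scale Rg Mg.
     Gr Rg (colon scale K) \<subseteq> Gr Rg (colon scale Q) \<longrightarrow> K = Q"
  proof (intro ballI impI)
    fix Q K assume "Q \<in> qpSpec scale Rg Mg" "K \<in> qpSpec scale Rg Mg"
      and "Gr Rg (colon scale K) \<subseteq> Gr Rg (colon scale Q)"
    then show "K = Q"
      using T1 qp_open_specialization_closed unfolding qp_T1_def by metis
  qed
next
  assume discrete: "\<forall>Q\<in>qpSpec scale Rg Mg. \<forall>K\<in>qpSpec scale Rg Mg.
     Gr Rg (colon scale K) \<subseteq> Gr Rg (colon scale Q) \<longrightarrow> K = Q"
  show "qp_T1 scale Rg Mg"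
    unfolding qp_T1_def
  proof (intro ballI impI)
    fix Q K assume "Q \<in> qpSpec scale Rg Mg" "K \<in> qpSpec scale Rg Mg" "Q \<noteq> K"
    then have "Q \<in> qpSpec scale Rg Mg - qpV scale Rg Mg K"
      and "K \<notin> qpSpec scale Rg Mg - qpV scale Rg Mg K"
      using discrete unfolding qpV_def by blast+
    then show "\<exists>U. qp_open scale Rg Mg U \<and> Q \<in> U \<and> K \<notin> U"
      using qp_open_compl_qpV[OF \<open>K \<in> qpSpec scale Rg Mg\<close>] by blast
  qed
qed

lemma qp_T0_iff:
  "qp_T0 scale Rg Mg \<longleftrightarrow> inj_on (\<lambda>Q. Gr Rg (colon scale Q)) (qpSpec scale Rg Mg)"
proof
  assume T0: "qp_T0 scale Rg Mg"
  show "inj_on (\<lambda>Q. Gr Rg (colon scale Q)) (qpSpec scale Rg Mg)"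
  proof (rule inj_onI)
    fix Q K assume "Q \<in> qpSpec scale Rg Mg" "K \<in> qpSpec scale Rg Mg"
      and "Gr Rg (colon scale Q) = Gr Rg (colon scale K)"
    then show "Q = K"
      using T0 qp_open_specialization_closed unfolding qp_T0_def by (metis order_refl)
  qed
next
  assume inj: "inj_on (\<lambda>Q. Gr Rg (colon scale Q)) (qpSpec scale Rg Mg)"
  show "qp_T0 scale Rg Mg"
    unfolding qp_T0_def
  proof (intro ballI impI)
    fix Q K assume Q: "Q \<in> qpSpec scale Rg Mg" and K: "K \<in> qpSpec scale Rg Mg" and "Q \<noteq> K"
    then have "\<not> Gr Rg (colon scale Q) \<subseteq> Gr Rg (colon scale K)
        \<or> \<not> Gr Rg (colon scale K) \<subseteq> Gr Rg (colon scale Q)"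
      using inj unfolding inj_on_def by blast
    then show "\<exists>U. qp_open scale Rg Mg U \<and> (Q \<in> U \<longleftrightarrow> K \<notin> U)"
    proof
      assume "\<not> Gr Rg (colon scale Q) \<subseteq> Gr Rg (colon scale K)"
      then show ?thesis
        using qp_open_compl_qpV[OF Q] Q K unfolding qpV_def by blast
    next
      assume "\<not> Gr Rg (colon scale K) \<subseteq> Gr Rg (colon scale Q)"
      then show ?thesis
        using qp_open_compl_qpV[OF K] Q K unfolding qpV_def by blast
    qed
  qed
qed

lemma qp_T1_if_T0_and_qpSpec_antichain:
  assumes gm: "graded_module scale Rg Mg" and T0: "qp_T0 scale Rg Mg"
    and antichain: "\<forall>Q\<in>qpSpec scale Rg Mg. \<forall>K\<in>qpSpec scale Rg Mg. Q \<subseteq> K \<longrightarrow> K = Q"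
  shows "qp_T1 scale Rg Mg"
  unfolding qp_T1_iff
proof (intro ballI impI)
  have gr: "graded_ring Rg" using gm unfolding graded_module_def by blast
  have maximal: "graded_maximal_ideal Rg (colon scale Q)" if "Q \<in> qpSpec scale Rg Mg" for Q
    using colon_graded_maximal_if_maximal_in_qpSpec[OF gm that] antichain that by blast
  have Gr_colon: "Gr Rg (colon scale Q) = colon scale Q" if "Q \<in> qpSpec scale Rg Mg" for Q
    using Gr_graded_prime_ideal[OF gr graded_maximal_ideal_imp_prime[OF gr maximal[OF that]]] .
  fix Q K assume Q: "Q \<in> qpSpec scale Rg Mg" and K: "K \<in> qpSpec scale Rg Mg"
    and "Gr Rg (colon scale K) \<subseteq> Gr Rg (colon scale Q)"
  then have "colon scale K \<subseteq> colon scale Q" using Gr_colon by simp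
  moreover have "colon scale Q \<noteq> UNIV" and "graded_ideal Rg (colon scale Q)"
    using maximal[OF Q] unfolding graded_maximal_ideal_def by blast+
  ultimately have "colon scale K = colon scale Q"
    using maximal[OF K] unfolding graded_maximal_ideal_def by blast
  then show "K = Q" using T0 Q K unfolding qp_T0_iff inj_on_def by auto
qed

lemma qp_T1_iff_T0_and_Gr_colon_maximal:
  "qp_T1 scale Rg Mg \<longleftrightarrow> qp_T0 scale Rg Mg \<and>
     (\<forall>Q\<in>qpSpec scale Rg Mg. \<forall>K\<in>qpSpec scale Rg Mg.
        Gr Rg (colon scale Q) \<subseteq> Gr Rg (colon scale K) \<longrightarrow>
        Gr Rg (colon scale K) = Gr Rg (colon scale Q))"
  unfolding qp_T1_iff qp_T0_iff inj_on_def by blast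

lemma qp_T1_iff_T0_and_qpSpec_antichain:
  assumes "graded_module scale Rg Mg"
  shows "qp_T1 scale Rg Mg \<longleftrightarrow> qp_T0 scale Rg Mg \<and>
     (\<forall>Q\<in>qpSpec scale Rg Mg. \<forall>K\<in>qpSpec scale Rg Mg. Q \<subseteq> K \<longrightarrow> K = Q)"
proof (intro iffI conjI ballI impI)
  assume T1: "qp_T1 scale Rg Mg"
  then show "qp_T0 scale Rg Mg" by (simp add: qp_T1_iff_T0_and_Gr_colon_maximal)
  fix Q K assume "Q \<in> qpSpec scale Rg Mg" "K \<in> qpSpec scale Rg Mg" "Q \<subseteq> K"
  with T1 show "K = Q" unfolding qp_T1_iff by (metis Gr_colon_mono)
next
  assume "qp_T0 scale Rg Mg \<and>
     (\<forall>Q\<in>qpSpec scale Rg Mg. \<forall>K\<in>qpSpec scale Rg Mg. Q \<subseteq> K \<longrightarrow> K = Q)"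
  then show "qp_T1 scale Rg Mg"
    using qp_T1_if_T0_and_qpSpec_antichain[OF assms] by blast
qed

lemma qp_T1_iff_qpSpec_eq_zero:
  assumes gm: "graded_module scale Rg Mg" and zero: "{0} \<in> qpSpec scale Rg Mg"
  shows "qp_T1 scale Rg Mg \<longleftrightarrow> qpSpec scale Rg Mg = {{0}}"
proof
  assume T1: "qp_T1 scale Rg Mg"
  have md: "module scale" using gm unfolding graded_module_def by blast
  have "K = {0}" if K: "K \<in> qpSpec scale Rg Mg" for K
  proof -
    have "0 \<in> K"
      using qpSpecD[OF K] module.subspace_0[OF md] unfolding graded_submodule_def by blast
    then have "Gr Rg (colon scale {0}) \<subseteq> Gr Rg (colon scale K)" by (simp add: Gr_colon_mono)
    then show "K = {0}" using T1 K zero unfolding qp_T1_iff by blast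
  qed
  then show "qpSpec scale Rg Mg = {{0}}" using zero by blast
qed (simp add: qp_T1_iff)

lemma qp_T1_if_T0_and_qpSpec_eq_Max_g:
  assumes "graded_module scale Rg Mg" and "qp_T0 scale Rg Mg"
    and "qpSpec scale Rg Mg = Max_g scale Mg"
  shows "qp_T1 scale Rg Mg"
proof (rule qp_T1_if_T0_and_qpSpec_antichain[OF assms(1,2)])
  show "\<forall>Q\<in>qpSpec scale Rg Mg. \<forall>K\<in>qpSpec scale Rg Mg. Q \<subseteq> K \<longrightarrow> K = Q"
    unfolding assms(3) Max_g_def by blast
qed

theorem theorem4p4:
  fixes scale :: "'r::comm_ring_1 \<Rightarrow> 'm::ab_group_add \<Rightarrow> 'm"
    and Rg :: "'g::group_add \<Rightarrow> 'r set"
    and Mg :: "'g \<Rightarrow> 'm set"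
  assumes "graded_module scale Rg Mg"
  shows
    "(qp_T1 scale Rg Mg \<longleftrightarrow> qp_T0 scale Rg Mg \<and>
        (\<forall>Q\<in>qpSpec scale Rg Mg. \<forall>K\<in>qpSpec scale Rg Mg.
            Gr Rg (colon scale Q) \<subseteq> Gr Rg (colon scale K) \<longrightarrow>
            Gr Rg (colon scale K) = Gr Rg (colon scale Q)))
   \<and> (qp_T1 scale Rg Mg \<longleftrightarrow> qp_T0 scale Rg Mg \<and>
        (\<forall>Q\<in>qpSpec scale Rg Mg. \<forall>K\<in>qpSpec scale Rg Mg. Q \<subseteq> K \<longrightarrow> K = Q))
   \<and> ({0} \<in> qpSpec scale Rg Mg \<longrightarrow>
        (qp_T1 scale Rg Mg \<longleftrightarrow> qpSpec scale Rg Mg = {{0}}))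
   \<and> (qp_T0 scale Rg Mg \<and> qpSpec scale Rg Mg = Max_g scale Mg \<longrightarrow> qp_T1 scale Rg Mg)"
  by (intro conjI impI qp_T1_iff_T0_and_Gr_colon_maximal
      qp_T1_iff_T0_and_qpSpec_antichain[OF assms] qp_T1_iff_qpSpec_eq_zero[OF assms])
    (auto intro: qp_T1_if_T0_and_qpSpec_eq_Max_g[OF assms])

end
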